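(* Let $X$ be a set strongly star Hurewicz space. Then the following are equivalent: (1) $X$ is meta-Lindel\"of; (2) $X$ is para-Lindel\"of; (3) $X$ is Lindel\"of.
   Context: For a subset $A$ of a space $X$ and a collection $\mathcal{U}$ of subsets of $X$, ${\rm St}(A,\mathcal{U}) = \bigcup\{U \in \mathcal{U}: U \cap A \neq \emptyset\}$. A space is meta-Lindel\"of if each open cover has a point-countable open refinement, and para-Lindel\"of if each open cover has a locally countable open refinement. $X$ is set strongly star Hurewicz if for each nonempty $A \subset X$ and each sequence $(\mathcal{U}_n: n\in\mathbb{N})$ of collections of sets open in $X$ with $\overline{A} \subset \bigcup\mathcal{U}_n$ for all $n$, there are finite sets $F_n \subset \overline{A}$ such that each $x \in A$ lies in ${\rm St}(F_n,\mathcal{U}_n)$ for all but finitely many $n$. *)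

theory Defs
  imports "HOL-Analysis.Analysis"
begin

definition star_of :: "'a set \<Rightarrow> 'a set set \<Rightarrow> 'a set" where
  "star_of A \<U> = \<Union>{U \<in> \<U>. U \<inter> A \<noteq> {}}"

definition open_refinement :: "'a topology \<Rightarrow> 'a set set \<Rightarrow> 'a set set \<Rightarrow> bool" where
  "open_refinement X \<V> \<U> \<longleftrightarrow>
     (\<forall>V\<in>\<V>. openin X V) \<and> \<Union>\<V> = topspace X \<and> (\<forall>V\<in>\<V>. \<exists>U\<in>\<U>. V \<subseteq> U)"

definition meta_Lindelof :: "'a topology \<Rightarrow> bool" where
  "meta_Lindelof X \<longleftrightarrow>
     (\<forall>\<U>. (\<forall>U\<in>\<U>. openin X U) \<and> \<Union>\<U> = topspace X \<longrightarrow>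
        (\<exists>\<V>. open_refinement X \<V> \<U> \<and>
              (\<forall>x\<in>topspace X. countable {V\<in>\<V>. x \<in> V})))"

definition para_Lindelof :: "'a topology \<Rightarrow> bool" where
  "para_Lindelof X \<longleftrightarrow>
     (\<forall>\<U>. (\<forall>U\<in>\<U>. openin X U) \<and> \<Union>\<U> = topspace X \<longrightarrow>
        (\<exists>\<V>. open_refinement X \<V> \<U> \<and>
              (\<forall>x\<in>topspace X. \<exists>N. openin X N \<and> x \<in> N \<and>
                    countable {V\<in>\<V>. V \<inter> N \<noteq> {}})))"

definition set_strongly_star_Hurewicz :: "'a topology \<Rightarrow> bool" where
  "set_strongly_star_Hurewicz X \<longleftrightarrow>
     (\<forall>A. A \<noteq> {} \<and> A \<subseteq> topspace X \<longrightarrow>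
       (\<forall>\<U> :: nat \<Rightarrow> 'a set set.
          (\<forall>n. (\<forall>U\<in>\<U> n. openin X U) \<and> X closure_of A \<subseteq> \<Union>(\<U> n)) \<longrightarrow>
          (\<exists>F :: nat \<Rightarrow> 'a set.
             (\<forall>n. finite (F n) \<and> F n \<subseteq> X closure_of A) \<and>
             (\<forall>x\<in>A. \<forall>\<^sub>F n in sequentially. x \<in> star_of (F n) (\<U> n)))))"

end

theory Submission
  imports Defs
begin

text \<open>Applied to the whole space, the set strongly star Hurewicz property yields finite sets
  \<open>F n\<close> whose stars with respect to a given open cover eventually contain every point, so the
  countable set \<open>C = (\<Union>n. F n)\<close> has the whole space as its star. If the cover is a
  point-countable refinement \<open>\<V>\<close> of \<open>\<U>\<close>, only countably many members of \<open>\<V>\<close> meet \<open>C\<close>, and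
  these already cover the space; a member of \<open>\<U>\<close> above each of them gives a countable
  subcover.\<close>

definition strongly_star_Lindelof :: "'a topology \<Rightarrow> bool" where
  "strongly_star_Lindelof X \<longleftrightarrow>
     (\<forall>\<U>. (\<forall>U\<in>\<U>. openin X U) \<and> topspace X \<subseteq> \<Union>\<U> \<longrightarrow>
        (\<exists>C. countable C \<and> C \<subseteq> topspace X \<and> topspace X \<subseteq> star_of C \<U>))"

lemma meta_LindelofD:
  "\<lbrakk>meta_Lindelof X; \<And>U. U \<in> \<U> \<Longrightarrow> openin X U; \<Union>\<U> = topspace X\<rbrakk>
   \<Longrightarrow> \<exists>\<V>. open_refinement X \<V> \<U> \<and> (\<forall>x\<in>topspace X. countable {V\<in>\<V>. x \<in> V})"
  by (simp add: meta_Lindelof_def)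

lemma para_LindelofD:
  "\<lbrakk>para_Lindelof X; \<And>U. U \<in> \<U> \<Longrightarrow> openin X U; \<Union>\<U> = topspace X\<rbrakk>
   \<Longrightarrow> \<exists>\<V>. open_refinement X \<V> \<U> \<and>
         (\<forall>x\<in>topspace X. \<exists>N. openin X N \<and> x \<in> N \<and> countable {V\<in>\<V>. V \<inter> N \<noteq> {}})"
  by (simp add: para_Lindelof_def)

lemma strongly_star_LindelofD:
  "\<lbrakk>strongly_star_Lindelof X; \<And>U. U \<in> \<U> \<Longrightarrow> openin X U; topspace X \<subseteq> \<Union>\<U>\<rbrakk>
   \<Longrightarrow> \<exists>C. countable C \<and> C \<subseteq> topspace X \<and> topspace X \<subseteq> star_of C \<U>"
  by (simp add: strongly_star_Lindelof_def)

lemma open_refinement_subcover: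
  assumes "\<V> \<subseteq> \<U>" and "\<forall>U\<in>\<U>. openin X U" and "\<Union>\<V> = topspace X"
  shows "open_refinement X \<V> \<U>"
  unfolding open_refinement_def using assms by blast

lemma Lindelof_imp_para_Lindelof:
  assumes "Lindelof_space X"
  shows "para_Lindelof X"
  unfolding para_Lindelof_def
proof (intro allI impI, elim conjE)
  fix \<U> :: "'a set set"
  assume "\<forall>U\<in>\<U>. openin X U" and "\<Union>\<U> = topspace X"
  then obtain \<V> where \<V>: "countable \<V>" "\<V> \<subseteq> \<U>" "\<Union>\<V> = topspace X"
    using Lindelof_spaceD[OF assms] by meson
  then have "open_refinement X \<V> \<U>"
    using \<open>\<forall>U\<in>\<U>. openin X U\<close> by (intro open_refinement_subcover)
  moreover have "countable {V\<in>\<V>. V \<inter> topspace X \<noteq> {}}"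
    using \<V>(1) by (rule countable_subset[rotated]) blast
  ultimately show "\<exists>\<V>. open_refinement X \<V> \<U> \<and>
      (\<forall>x\<in>topspace X. \<exists>N. openin X N \<and> x \<in> N \<and> countable {V\<in>\<V>. V \<inter> N \<noteq> {}})"
    by (intro exI[of _ \<V>] conjI ballI exI[of _ "topspace X"]) auto
qed

lemma para_Lindelof_imp_meta_Lindelof:
  assumes "para_Lindelof X"
  shows "meta_Lindelof X"
  unfolding meta_Lindelof_def
proof (intro allI impI, elim conjE)
  fix \<U> :: "'a set set"
  assume "\<forall>U\<in>\<U>. openin X U" and "\<Union>\<U> = topspace X"
  then obtain \<V> where \<V>: "open_refinement X \<V> \<U>"
    and loc: "\<forall>x\<in>topspace X. \<exists>N. openin X N \<and> x \<in> N \<and> countable {V\<in>\<V>. V \<inter> N \<noteq> {}}"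
    using para_LindelofD[OF assms] by meson
  have "countable {V\<in>\<V>. x \<in> V}" if x: "x \<in> topspace X" for x
  proof -
    obtain N where N: "x \<in> N" "countable {V\<in>\<V>. V \<inter> N \<noteq> {}}"
      using loc x by meson
    show ?thesis by (rule countable_subset[OF _ N(2)]) (use N(1) in blast)
  qed
  with \<V> show "\<exists>\<V>. open_refinement X \<V> \<U> \<and> (\<forall>x\<in>topspace X. countable {V\<in>\<V>. x \<in> V})"
    by blast
qed

lemma set_strongly_star_Hurewicz_imp_strongly_star_Lindelof:
  assumes "set_strongly_star_Hurewicz X"
  shows "strongly_star_Lindelof X"
  unfolding strongly_star_Lindelof_def
proof (intro allI impI)
  fix \<U> assume \<U>: "(\<forall>U\<in>\<U>. openin X U) \<and> topspace X \<subseteq> \<Union>\<U>"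
  show "\<exists>C. countable C \<and> C \<subseteq> topspace X \<and> topspace X \<subseteq> star_of C \<U>"
  proof (cases "topspace X = {}")
    case True
    then show ?thesis by (intro exI[of _ "{}"]) simp
  next
    case False
    have "\<exists>F :: nat \<Rightarrow> 'a set. (\<forall>n. finite (F n) \<and> F n \<subseteq> X closure_of topspace X) \<and>
        (\<forall>x\<in>topspace X. \<forall>\<^sub>F n in sequentially. x \<in> star_of (F n) \<U>)"
      by (rule assms[unfolded set_strongly_star_Hurewicz_def, rule_format])
        (use False \<U> in auto)
    then obtain F :: "nat \<Rightarrow> 'a set"
      where F: "\<And>n. finite (F n) \<and> F n \<subseteq> topspace X"
        and star: "\<forall>x\<in>topspace X. \<forall>\<^sub>F n in sequentially. x \<in> star_of (F n) \<U>"
      by auto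
    have "topspace X \<subseteq> star_of (\<Union>n. F n) \<U>"
    proof
      fix x assume "x \<in> topspace X"
      then obtain n where "x \<in> star_of (F n) \<U>"
        using star by (meson eventually_sequentially order.refl)
      then show "x \<in> star_of (\<Union>n. F n) \<U>"
        unfolding star_of_def by blast
    qed
    moreover have "countable (\<Union>n. F n)" "(\<Union>n. F n) \<subseteq> topspace X"
      using F by (auto simp: countable_finite)
    ultimately show ?thesis by blast
  qed
qed

lemma countable_members_meeting:
  assumes "countable C" and "\<And>x. x \<in> C \<Longrightarrow> countable {V\<in>\<V>. x \<in> V}"
  shows "countable {V\<in>\<V>. V \<inter> C \<noteq> {}}"
proof -
  have "{V\<in>\<V>. V \<inter> C \<noteq> {}} = (\<Union>x\<in>C. {V\<in>\<V>. x \<in> V})" by blast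
  then show ?thesis using assms by simp
qed

lemma countable_refinement_imp_countable_subcover:
  assumes "countable \<W>" and "\<Union>\<W> = topspace X" and "\<forall>W\<in>\<W>. \<exists>U\<in>\<U>. W \<subseteq> U"
    and "\<Union>\<U> = topspace X"
  shows "\<exists>\<U>'. countable \<U>' \<and> \<U>' \<subseteq> \<U> \<and> \<Union>\<U>' = topspace X"
proof -
  obtain g where g: "\<And>W. W \<in> \<W> \<Longrightarrow> g W \<in> \<U> \<and> W \<subseteq> g W"
    using assms(3) by metis
  have "\<Union>(g ` \<W>) = topspace X"
  proof (rule subset_antisym)
    show "\<Union>(g ` \<W>) \<subseteq> topspace X"
      unfolding assms(4)[symmetric] using g by blast
    show "topspace X \<subseteq> \<Union>(g ` \<W>)"
      unfolding assms(2)[symmetric] using g by blast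
  qed
  moreover have "countable (g ` \<W>)" "g ` \<W> \<subseteq> \<U>"
    using assms(1) g by auto
  ultimately show ?thesis by meson
qed

lemma meta_Lindelof_strongly_star_Lindelof_imp_Lindelof:
  assumes "strongly_star_Lindelof X" and "meta_Lindelof X"
  shows "Lindelof_space X"
  unfolding Lindelof_space_def
proof (intro allI impI, elim conjE)
  fix \<U> :: "'a set set"
  assume \<U>: "\<forall>U\<in>\<U>. openin X U" "\<Union>\<U> = topspace X"
  then obtain \<V> where \<V>: "open_refinement X \<V> \<U>"
    and point_countable: "\<forall>x\<in>topspace X. countable {V\<in>\<V>. x \<in> V}"
    using meta_LindelofD[OF assms(2)] by meson
  then have "\<forall>V\<in>\<V>. openin X V" "\<Union>\<V> = topspace X" "\<forall>V\<in>\<V>. \<exists>U\<in>\<U>. V \<subseteq> U"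
    unfolding open_refinement_def by simp_all
  then obtain C where C: "countable C" "C \<subseteq> topspace X" "topspace X \<subseteq> star_of C \<V>"
    using strongly_star_LindelofD[OF assms(1)] by (metis order.refl)
  let ?\<W> = "{V\<in>\<V>. V \<inter> C \<noteq> {}}"
  have "countable ?\<W>"
    using C(1,2) point_countable by (intro countable_members_meeting) auto
  moreover have "\<Union>?\<W> = topspace X"
    using C(3) \<open>\<Union>\<V> = topspace X\<close> unfolding star_of_def by blast
  moreover have "\<forall>W\<in>?\<W>. \<exists>U\<in>\<U>. W \<subseteq> U"
    using \<open>\<forall>V\<in>\<V>. \<exists>U\<in>\<U>. V \<subseteq> U\<close> by blast
  ultimately show "\<exists>\<U>'. countable \<U>' \<and> \<U>' \<subseteq> \<U> \<and> \<Union>\<U>' = topspace X"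
    using \<U>(2) by (rule countable_refinement_imp_countable_subcover)
qed

theorem mainTheorem4:
  fixes X :: "'a topology"
  assumes "set_strongly_star_Hurewicz X"
  shows "(meta_Lindelof X \<longleftrightarrow> para_Lindelof X) \<and> (para_Lindelof X \<longleftrightarrow> Lindelof_space X)"
proof -
  have "meta_Lindelof X \<Longrightarrow> Lindelof_space X"
    using assms set_strongly_star_Hurewicz_imp_strongly_star_Lindelof
      meta_Lindelof_strongly_star_Lindelof_imp_Lindelof by blast
  then show ?thesis
    using Lindelof_imp_para_Lindelof para_Lindelof_imp_meta_Lindelof by blast
qed

end
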